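(* Let $p,q\in(0,1)$ and define $$h(p,q)=4p^2q^4-12p^2q^3+12p^2q^2-4p^2q-2pq^4+8pq^3-12pq^2+8pq,$$ which equals $\mathbb{E}^{(1,1)}_{p,q}[Z_1]=\mathbb{E}[\min(U,V)]$ for independent $U\sim\mathrm{Bin}(4,q)$ and $V\sim\mathrm{Bin}(2,p)$. If $h(p,q)>1$, then $\mathbb{P}^{(1,1)}_{p,q}(\tau=+\infty)>0$.
   Context: Cooperative model: for $p,q\in(0,1)$, a Markov chain $(X_n,Y_n)_{n\ge0}$ on $\mathbb{N}^2$ whose transition law from state $(x,y)$ is $\mu_{(x,y)}=\mathrm{Bin}(2,q)^{*(x+y)}\otimes\mathrm{Bin}(2,p)^{*\min(x,y)}$, i.e. given the past, $X_{n+1}\sim\mathrm{Bin}(2(X_n+Y_n),q)$ and $Y_{n+1}\sim\mathrm{Bin}(2\min(X_n,Y_n),p)$ are independent. $\mathbb{P}^{(x,y)}_{p,q}$ (expectation $\mathbb{E}^{(x,y)}_{p,q}$) denotes the law of this process started from $(x,y)$. $Z_n=\min(X_n,Y_n)$ and $\tau=\inf\{n\ge0: Z_n=0\}$. *)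

theory Defs
  imports "HOL-Probability.Probability"
begin

definition coop_h :: "real \<Rightarrow> real \<Rightarrow> real" where
  "coop_h p q = 4*p^2*q^4 - 12*p^2*q^3 + 12*p^2*q^2 - 4*p^2*q
               - 2*p*q^4 + 8*p*q^3 - 12*p*q^2 + 8*p*q"

text \<open>Probability space carrying an independent array of coin flips:
  coin (True, n, i) is Bernoulli(q) (used for X at step n+1),
  coin (False, n, i) is Bernoulli(p) (used for Y at step n+1).\<close>
definition coop_space :: "real \<Rightarrow> real \<Rightarrow> (bool \<times> nat \<times> nat \<Rightarrow> bool) measure" where
  "coop_space p q =
     PiM UNIV (\<lambda>(b, n, i). measure_pmf (bernoulli_pmf (if b then q else p)))"

text \<open>The cooperative chain (X_n, Y_n) started from s, realised on the coin space:
  X_{n+1} = number of successes among 2(X_n+Y_n) Bernoulli(q) coins, i.e. Bin(2(X_n+Y_n), q);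
  Y_{n+1} = number of successes among 2 min(X_n,Y_n) Bernoulli(p) coins, i.e. Bin(2 min(X_n,Y_n), p);
  fresh independent coins are used at each step.\<close>
fun coop_state :: "(bool \<times> nat \<times> nat \<Rightarrow> bool) \<Rightarrow> nat \<times> nat \<Rightarrow> nat \<Rightarrow> nat \<times> nat" where
  "coop_state \<omega> s 0 = s"
| "coop_state \<omega> s (Suc n) =
     (case coop_state \<omega> s n of (x, y) \<Rightarrow>
        (card {i. i < 2 * (x + y) \<and> \<omega> (True, n, i)},
         card {i. i < 2 * min x y \<and> \<omega> (False, n, i)}))"

definition coop_Z :: "(bool \<times> nat \<times> nat \<Rightarrow> bool) \<Rightarrow> nat \<times> nat \<Rightarrow> nat \<Rightarrow> nat" where
  "coop_Z \<omega> s n = (case coop_state \<omega> s n of (x, y) \<Rightarrow> min x y)"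

text \<open>The event {tau = +infinity} under P^(s): Z_n never hits 0.\<close>
definition coop_survive :: "real \<Rightarrow> real \<Rightarrow> nat \<times> nat \<Rightarrow> (bool \<times> nat \<times> nat \<Rightarrow> bool) set" where
  "coop_survive p q s = {\<omega> \<in> space (coop_space p q). \<forall>n. coop_Z \<omega> s n \<noteq> 0}"

end

theory Submission
  imports Defs
begin

text \<open>
  Let \<open>\<phi>(s) = E s\<^bsup>min(U,V)\<^esup>\<close> with \<open>U \<sim> Bin(4,q)\<close>, \<open>V \<sim> Bin(2,p)\<close> independent.
  Writing \<open>a\<^sub>0 = P(min(U,V) = 0)\<close> and \<open>a\<^sub>2 = P(min(U,V) = 2)\<close> one finds
  \<open>\<phi>(s) = s + (1 - s)(a\<^sub>0 - a\<^sub>2 s)\<close> and \<open>h = 1 - a\<^sub>0 + a\<^sub>2\<close>, so \<open>h > 1\<close> yields a fixed point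
  \<open>s = a\<^sub>0 / a\<^sub>2 \<in> [0,1)\<close> of \<open>\<phi>\<close>.
  Given \<open>Z\<^sub>n = z\<close>, the next values are \<open>X\<^sub>n\<^sub>+\<^sub>1 \<sim> Bin(N,q)\<close> with \<open>N \<ge> 4z\<close> and
  \<open>Y\<^sub>n\<^sub>+\<^sub>1 \<sim> Bin(2z,p)\<close>; splitting both into \<open>z\<close> blocks and using superadditivity of \<open>min\<close>
  gives \<open>E[s\<^bsup>Z\<^sub>n\<^sub>+\<^sub>1\<^esup> | Z\<^sub>n] \<le> \<phi>(s)\<^bsup>Z\<^sub>n\<^esup> = s\<^bsup>Z\<^sub>n\<^esup>\<close>.
  Hence \<open>P(Z\<^sub>n = 0) \<le> E s\<^bsup>Z\<^sub>n\<^esup> \<le> s\<close> for every \<open>n\<close>, and by continuity from above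
  \<open>P(\<tau> = \<infinity>) \<ge> 1 - s > 0\<close>.
\<close>

section \<open>Finitely determined events in products of probability mass functions\<close>

lemma distr_restrict_Pi_pmf:
  assumes fin: "finite J"
  shows "distr (measure_pmf (Pi_pmf J d c)) (PiM J (\<lambda>j. measure_pmf (c j))) (\<lambda>f. restrict f J)
         = PiM J (\<lambda>j. measure_pmf (c j))"
proof (rule product_sigma_finite.PiM_eqI)
  show "product_sigma_finite (\<lambda>j. measure_pmf (c j))"
    by (simp add: product_sigma_finite_def measure_pmf.sigma_finite_measure_axioms)
  fix A assume A: "\<And>i. i \<in> J \<Longrightarrow> A i \<in> sets (measure_pmf (c i))"
  have "Pi\<^sub>E J A \<in> sets (Pi\<^sub>M J (\<lambda>j. measure_pmf (c j)))"
    using A by (intro sets_PiM_I_finite fin) auto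
  then have "emeasure (distr (measure_pmf (Pi_pmf J d c)) (PiM J (\<lambda>j. measure_pmf (c j)))
               (\<lambda>f. restrict f J)) (Pi\<^sub>E J A)
      = emeasure (measure_pmf (Pi_pmf J d c)) ((\<lambda>x. restrict x J) -` Pi\<^sub>E J A)"
    by (subst emeasure_distr) (auto simp: space_PiM)
  also have "\<dots> = emeasure (measure_pmf (Pi_pmf J d c)) (PiE_dflt J d A)"
    by (intro emeasure_eq_AE AE_pmfI) (auto simp: PiE_dflt_def set_Pi_pmf fin)
  also have "\<dots> = (\<Prod>i\<in>J. emeasure (measure_pmf (c i)) (A i))"
    by (simp add: measure_pmf.emeasure_eq_measure measure_Pi_pmf_PiE_dflt fin prod_ennreal)
  finally show "emeasure (distr (measure_pmf (Pi_pmf J d c)) (PiM J (\<lambda>j. measure_pmf (c j)))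
                  (\<lambda>f. restrict f J)) (Pi\<^sub>E J A) = (\<Prod>i\<in>J. emeasure (measure_pmf (c i)) (A i))" .
qed (use fin in simp_all)

lemma sets_PiM_measure_pmf_countable:
  fixes c :: "'a \<Rightarrow> 'b::countable pmf"
  assumes fin: "finite J" and R: "R \<subseteq> space (PiM J (\<lambda>j. measure_pmf (c j)))"
  shows "R \<in> sets (PiM J (\<lambda>j. measure_pmf (c j)))"
proof (rule sets.countable)
  fix a assume "a \<in> R"
  with R have "a \<in> PiE J (\<lambda>_. UNIV)" by (auto simp: space_PiM)
  then have "{a} = PiE J (\<lambda>j. {a j})" by (auto simp: PiE_iff extensional_def fun_eq_iff) metis
  then show "{a} \<in> sets (PiM J (\<lambda>j. measure_pmf (c j)))"
    using fin by (auto intro!: sets_PiM_I_finite)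
next
  have "countable (PiE J (\<lambda>_. UNIV :: 'b set))" using fin by (intro countable_PiE) auto
  then show "countable R" using R by (auto simp: space_PiM intro: countable_subset)
qed

context
  fixes c :: "'a \<Rightarrow> 'b::countable pmf" and J :: "'a set" and P :: "('a \<Rightarrow> 'b) \<Rightarrow> bool"
    and M :: "'a \<Rightarrow> 'b measure"
  defines "M \<equiv> \<lambda>j. measure_pmf (c j)"
  assumes fin: "finite J"
    and determined: "\<And>\<omega> \<omega>'. (\<And>j. j \<in> J \<Longrightarrow> \<omega> j = \<omega>' j) \<Longrightarrow> P \<omega> = P \<omega>'"
begin

private lemma event_eq_vimage_restrict:
  "{\<omega> \<in> space (PiM UNIV M). P \<omega>}
     = (\<lambda>\<omega>. restrict \<omega> J) -` {a \<in> space (PiM J M). P a} \<inter> space (PiM UNIV M)"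
  using determined[of "restrict _ J"] by (auto simp: space_PiM)

private lemma restricted_event_in_sets: "{a \<in> space (PiM J M). P a} \<in> sets (PiM J M)"
  using fin unfolding M_def by (intro sets_PiM_measure_pmf_countable) auto

lemma finitely_determined_in_sets_PiM_pmf:
  "{\<omega> \<in> space (PiM UNIV M). P \<omega>} \<in> sets (PiM UNIV M)"
  unfolding event_eq_vimage_restrict
  by (rule measurable_sets[OF measurable_restrict_subset restricted_event_in_sets]) simp

lemma measure_finitely_determined_PiM_pmf:
  "measure (PiM UNIV M) {\<omega> \<in> space (PiM UNIV M). P \<omega>} = measure_pmf.prob (Pi_pmf J d c) {f. P f}"
proof -
  interpret product_prob_space M UNIV
    unfolding M_def by (intro product_prob_spaceI measure_pmf.prob_space_axioms)
  let ?R = "{a \<in> space (PiM J M). P a}"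
  have "measure (PiM UNIV M) {\<omega> \<in> space (PiM UNIV M). P \<omega>}
      = measure (distr (PiM UNIV M) (PiM J M) (\<lambda>\<omega>. restrict \<omega> J)) ?R"
    unfolding event_eq_vimage_restrict
    using restricted_event_in_sets by (simp add: measure_distr)
  also have "\<dots> = measure (PiM J M) ?R"
    using fin by (simp add: distr_PiM_restrict_finite)
  also have "\<dots> = measure (distr (measure_pmf (Pi_pmf J d c)) (PiM J M) (\<lambda>f. restrict f J)) ?R"
    using fin by (simp add: M_def distr_restrict_Pi_pmf)
  also have "\<dots> = measure_pmf.prob (Pi_pmf J d c) ((\<lambda>f. restrict f J) -` ?R)"
    using restricted_event_in_sets by (subst measure_distr) (auto simp: space_PiM M_def)
  also have "(\<lambda>f. restrict f J) -` ?R = {f. P f}"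
    using determined[of "restrict _ J"] by (auto simp: space_PiM M_def)
  finally show ?thesis .
qed

end

section \<open>The coin space and the dependence of the chain on finitely many coins\<close>

definition coin_pmf :: "real \<Rightarrow> real \<Rightarrow> bool \<times> nat \<times> nat \<Rightarrow> bool pmf" where
  "coin_pmf p q = (\<lambda>(b, n, i). bernoulli_pmf (if b then q else p))"

lemma coop_space_eq_PiM_coin_pmf: "coop_space p q = PiM UNIV (\<lambda>j. measure_pmf (coin_pmf p q j))"
  unfolding coop_space_def coin_pmf_def
  by (intro arg_cong[where f="PiM UNIV"] ext) (auto split: prod.splits)

lemma prob_space_coop_space: "prob_space (coop_space p q)"
  unfolding coop_space_eq_PiM_coin_pmf by (intro prob_space_PiM measure_pmf.prob_space_axioms)

text \<open>From \<open>(1,1)\<close> one has \<open>X\<^sub>n + Y\<^sub>n \<le> 2\<cdot>3\<^sup>n\<close>, so step \<open>n\<close> reads at most \<open>4\<cdot>3\<^sup>n\<close> coins of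
  each colour.\<close>

definition coins_at :: "nat \<Rightarrow> (bool \<times> nat \<times> nat) set" where
  "coins_at n = {(b, k, i). k = n \<and> i < 4 * 3 ^ n}"

definition coins_before :: "nat \<Rightarrow> (bool \<times> nat \<times> nat) set" where
  "coins_before n = (\<Union>k<n. coins_at k)"

lemma finite_coins_at: "finite (coins_at n)"
  by (rule finite_subset[of _ "UNIV \<times> {n} \<times> {..<4 * 3 ^ n}"]) (auto simp: coins_at_def)

lemma finite_coins_before: "finite (coins_before n)"
  by (simp add: coins_before_def finite_coins_at)

lemma coins_before_Suc: "coins_before (Suc n) = coins_before n \<union> coins_at n"
  by (simp add: coins_before_def lessThan_Suc sup_commute)

lemma coins_before_Int_coins_at: "coins_before n \<inter> coins_at n = {}"
  by (auto simp: coins_before_def coins_at_def)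

lemma coin_at_notin_coins_before: "(b, n, i) \<notin> coins_before n"
  by (auto simp: coins_before_def coins_at_def)

lemma card_Collect_less_conj_le: "card {i. i < N \<and> P i} \<le> (N :: nat)"
  using card_mono[of "{..<N}" "{i. i < N \<and> P i}"] by auto

lemma coop_state_bound: "coop_state \<omega> (1, 1) n = (x, y) \<Longrightarrow> x + y \<le> 2 * 3 ^ n"
proof (induction n arbitrary: x y)
  case (Suc n)
  obtain x' y' where st: "coop_state \<omega> (1, 1) n = (x', y')" by fastforce
  have "x = card {i. i < 2 * (x' + y') \<and> \<omega> (True, n, i)}"
    and "y = card {i. i < 2 * min x' y' \<and> \<omega> (False, n, i)}"
    using Suc.prems st by auto
  then have "x \<le> 2 * (x' + y')" "y \<le> 2 * min x' y'"
    by (simp_all only: card_Collect_less_conj_le)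
  moreover have "2 * min x' y' \<le> x' + y'" by simp
  ultimately show ?case using Suc.IH[OF st] by simp
qed simp

lemma coop_state_coins_before:
  "(\<And>j. j \<in> coins_before n \<Longrightarrow> \<omega> j = \<omega>' j) \<Longrightarrow> coop_state \<omega> (1, 1) n = coop_state \<omega>' (1, 1) n"
proof (induction n)
  case (Suc n)
  have IH: "coop_state \<omega> (1, 1) n = coop_state \<omega>' (1, 1) n"
    using Suc.prems by (intro Suc.IH) (auto simp: coins_before_Suc)
  obtain x y where st: "coop_state \<omega> (1, 1) n = (x, y)" by fastforce
  have "2 * (x + y) \<le> 4 * 3 ^ n" using coop_state_bound[OF st] by simp
  then have same: "\<omega> (b, n, i) = \<omega>' (b, n, i)" if "i < 2 * (x + y)" for b i
    using Suc.prems that by (auto simp: coins_before_Suc coins_at_def)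
  have "{i. i < 2 * (x + y) \<and> \<omega> (True, n, i)} = {i. i < 2 * (x + y) \<and> \<omega>' (True, n, i)}"
    using same by blast
  moreover have "{i. i < 2 * min x y \<and> \<omega> (False, n, i)} = {i. i < 2 * min x y \<and> \<omega>' (False, n, i)}"
  proof -
    have "i < 2 * (x + y)" if "i < 2 * min x y" for i using that by simp
    then show ?thesis using same by blast
  qed
  ultimately show ?case using st IH[symmetric] by (simp del: One_nat_def)
qed simp

lemma coop_Z_coins_before:
  "(\<And>j. j \<in> coins_before n \<Longrightarrow> \<omega> j = \<omega>' j) \<Longrightarrow> coop_Z \<omega> (1, 1) n = coop_Z \<omega>' (1, 1) n"
  unfolding coop_Z_def using coop_state_coins_before by metis

lemma coop_Z_Suc_eq_0: "coop_Z \<omega> s n = 0 \<Longrightarrow> coop_Z \<omega> s (Suc n) = 0"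
  by (cases "coop_state \<omega> s n") (auto simp: coop_Z_def min_def split: if_splits)

lemma coop_Z_event_in_sets:
  "{\<omega> \<in> space (coop_space p q). P (coop_Z \<omega> (1, 1) n)} \<in> sets (coop_space p q)"
  unfolding coop_space_eq_PiM_coin_pmf
  by (rule finitely_determined_in_sets_PiM_pmf[OF finite_coins_before])
     (rule arg_cong[where f=P], rule coop_Z_coins_before, blast)

lemma measure_coop_Z_event:
  "measure (coop_space p q) {\<omega> \<in> space (coop_space p q). P (coop_Z \<omega> (1, 1) n)}
     = measure_pmf.prob (Pi_pmf (coins_before n) False (coin_pmf p q)) {f. P (coop_Z f (1, 1) n)}"
  unfolding coop_space_eq_PiM_coin_pmf
  by (rule measure_finitely_determined_PiM_pmf[OF finite_coins_before])
     (rule arg_cong[where f=P], rule coop_Z_coins_before, blast)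

section \<open>Minima of independent binomial variables\<close>

lemma binomial_pmf_add:
  assumes r: "r \<in> {0..1}"
  shows "binomial_pmf (m + k) r = map_pmf (\<lambda>(a, b). a + b) (pair_pmf (binomial_pmf m r) (binomial_pmf k r))"
proof (induction m)
  case 0
  show ?case using r by (simp add: binomial_pmf_0 pair_return_pmf1 pmf.map_comp o_def)
next
  case (Suc m)
  show ?case using r
    by (simp add: binomial_pmf_Suc Suc.IH pair_pmf_def map_bind_pmf bind_map_pmf bind_assoc_pmf
        bind_return_pmf add.assoc)
qed

lemma nn_integral_pmf_swap:
  fixes A :: "'a pmf" and B :: "'b pmf"
  shows "(\<integral>\<^sup>+x. \<integral>\<^sup>+y. f x y \<partial>B \<partial>A) = (\<integral>\<^sup>+y. \<integral>\<^sup>+x. f x y \<partial>A \<partial>B)"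
proof -
  have "(\<integral>\<^sup>+x. \<integral>\<^sup>+y. f x y \<partial>B \<partial>A) = (\<integral>\<^sup>+z. f (fst z) (snd z) \<partial>pair_pmf A B)"
    by (simp add: nn_integral_pair_pmf')
  also have "pair_pmf A B = map_pmf (\<lambda>(x, y). (y, x)) (pair_pmf B A)"
    by (rule pair_commute_pmf)
  also have "(\<integral>\<^sup>+z. f (fst z) (snd z) \<partial>map_pmf (\<lambda>(x, y). (y, x)) (pair_pmf B A))
      = (\<integral>\<^sup>+y. \<integral>\<^sup>+x. f x y \<partial>A \<partial>B)"
    by (simp add: nn_integral_pair_pmf' case_prod_unfold)
  finally show ?thesis .
qed

lemma nn_integral_binomial_pmf:
  assumes "p \<in> {0..1}" "\<And>k. 0 \<le> f k"
  shows "(\<integral>\<^sup>+k. ennreal (f k) \<partial>binomial_pmf n p) = ennreal (\<Sum>k\<le>n. f k * pmf (binomial_pmf n p) k)"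
proof -
  have "set_pmf (binomial_pmf n p) \<subseteq> {..n}"
    using assms(1) by (auto simp: set_pmf_binomial_eq)
  then have "(\<integral>\<^sup>+k. ennreal (f k) \<partial>binomial_pmf n p) = (\<Sum>k\<le>n. ennreal (f k) * pmf (binomial_pmf n p) k)"
    by (intro nn_integral_measure_pmf_support) auto
  then show ?thesis
    using assms(2) by (simp add: ennreal_mult sum_ennreal[symmetric])
qed

text \<open>Splitting \<open>Bin(N,q)\<close> and \<open>Bin(k z,p)\<close> into \<open>z\<close> independent blocks of sizes \<open>m\<close> and
  \<open>k\<close> (plus a surplus of \<open>N - m z\<close> trials), superadditivity of \<open>min\<close> bounds the generating
  function of the minimum by the \<open>z\<close>-th power of that of a single block.\<close>

lemma nn_integral_pow_min_binomial_le:
  fixes e :: ennreal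
  assumes e: "e \<le> 1" and p: "p \<in> {0..1}" and q: "q \<in> {0..1}"
  shows "m * z \<le> N \<Longrightarrow> (\<integral>\<^sup>+u. \<integral>\<^sup>+v. e ^ min u v \<partial>binomial_pmf (k * z) p \<partial>binomial_pmf N q)
           \<le> (\<integral>\<^sup>+u. \<integral>\<^sup>+v. e ^ min u v \<partial>binomial_pmf k p \<partial>binomial_pmf m q) ^ z"
proof (induction z arbitrary: N)
  case 0
  show ?case using p by (simp add: binomial_pmf_0 measure_pmf.emeasure_space_1)
next
  case (Suc z)
  define N' where "N' = N - m"
  have N: "N = N' + m" and N': "m * z \<le> N'" using Suc.prems by (auto simp: N'_def)
  define G where "G = (\<lambda>u2. \<integral>\<^sup>+v2. e ^ min u2 v2 \<partial>binomial_pmf k p)"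
  have "(\<integral>\<^sup>+u. \<integral>\<^sup>+v. e ^ min u v \<partial>binomial_pmf (k * Suc z) p \<partial>binomial_pmf N q)
     = (\<integral>\<^sup>+u1. \<integral>\<^sup>+u2. \<integral>\<^sup>+v1. \<integral>\<^sup>+v2. e ^ min (u1 + u2) (v1 + v2)
         \<partial>binomial_pmf k p \<partial>binomial_pmf (k * z) p \<partial>binomial_pmf m q \<partial>binomial_pmf N' q)"
    unfolding N mult_Suc_right add.commute[of k]
    by (simp only: binomial_pmf_add[OF p, of "k * z" k] binomial_pmf_add[OF q, of N' m])
       (simp add: nn_integral_pair_pmf' case_prod_unfold)
  also have "\<dots> \<le> (\<integral>\<^sup>+u1. \<integral>\<^sup>+u2. \<integral>\<^sup>+v1. \<integral>\<^sup>+v2. e ^ min u1 v1 * e ^ min u2 v2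
         \<partial>binomial_pmf k p \<partial>binomial_pmf (k * z) p \<partial>binomial_pmf m q \<partial>binomial_pmf N' q)"
  proof (intro nn_integral_mono)
    fix u1 u2 v1 v2 :: nat
    have "e ^ min (u1 + u2) (v1 + v2) \<le> e ^ (min u1 v1 + min u2 v2)"
      using e by (intro power_decreasing) auto
    then show "e ^ min (u1 + u2) (v1 + v2) \<le> e ^ min u1 v1 * e ^ min u2 v2"
      by (simp add: power_add)
  qed
  also have "\<dots> = (\<integral>\<^sup>+u1. \<integral>\<^sup>+u2. \<integral>\<^sup>+v1. e ^ min u1 v1 * G u2
         \<partial>binomial_pmf (k * z) p \<partial>binomial_pmf m q \<partial>binomial_pmf N' q)"
    by (simp add: G_def nn_integral_cmult)
  also have "\<dots> = (\<integral>\<^sup>+u1. \<integral>\<^sup>+v1. \<integral>\<^sup>+u2. e ^ min u1 v1 * G u2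
         \<partial>binomial_pmf m q \<partial>binomial_pmf (k * z) p \<partial>binomial_pmf N' q)"
    by (subst nn_integral_pmf_swap) (rule refl)
  also have "\<dots> = (\<integral>\<^sup>+u1. \<integral>\<^sup>+v1. e ^ min u1 v1 \<partial>binomial_pmf (k * z) p \<partial>binomial_pmf N' q)
      * (\<integral>\<^sup>+u2. G u2 \<partial>binomial_pmf m q)"
    by (simp add: nn_integral_cmult nn_integral_multc)
  also have "\<dots> \<le> (\<integral>\<^sup>+u. G u \<partial>binomial_pmf m q) ^ z * (\<integral>\<^sup>+u. G u \<partial>binomial_pmf m q)"
    using Suc.IH[OF N'] unfolding G_def by (intro mult_right_mono) auto
  finally show ?case by (simp add: G_def mult.commute)
qed

definition min_binomial_zero_prob :: "real \<Rightarrow> real \<Rightarrow> real" where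
  "min_binomial_zero_prob p q = (1 - q) ^ 4 + (1 - (1 - q) ^ 4) * (1 - p) ^ 2"

definition min_binomial_two_prob :: "real \<Rightarrow> real \<Rightarrow> real" where
  "min_binomial_two_prob p q = (1 - (1 - q) ^ 4 - 4 * q * (1 - q) ^ 3) * p ^ 2"

lemma coop_h_eq: "coop_h p q = 1 - min_binomial_zero_prob p q + min_binomial_two_prob p q"
  unfolding coop_h_def min_binomial_zero_prob_def min_binomial_two_prob_def by algebra

lemma nn_integral_pow_min_binomial_4_2:
  assumes p: "p \<in> {0..1}" and q: "q \<in> {0..1}" and "0 \<le> s"
  shows "(\<integral>\<^sup>+u. \<integral>\<^sup>+v. ennreal s ^ min u v \<partial>binomial_pmf 2 p \<partial>binomial_pmf 4 q)
       = ennreal (s + (1 - s) * (min_binomial_zero_prob p q - min_binomial_two_prob p q * s))"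
proof -
  have "(\<integral>\<^sup>+u. \<integral>\<^sup>+v. ennreal s ^ min u v \<partial>binomial_pmf 2 p \<partial>binomial_pmf 4 q)
      = ennreal (\<Sum>u\<le>4. (\<Sum>v\<le>2. s ^ min u v * pmf (binomial_pmf 2 p) v) * pmf (binomial_pmf 4 q) u)"
    using assms by (simp add: ennreal_power nn_integral_binomial_pmf sum_nonneg)
  also have "(\<Sum>u\<le>4. (\<Sum>v\<le>2. s ^ min u v * pmf (binomial_pmf 2 p) v) * pmf (binomial_pmf 4 q) u)
      = s + (1 - s) * (min_binomial_zero_prob p q - min_binomial_two_prob p q * s)"
    using p q by (simp add: numeral_eq_Suc min_binomial_zero_prob_def min_binomial_two_prob_def) algebra
  finally show ?thesis .
qed

lemma coop_fixpoint:
  assumes "p \<in> {0..1}" "q \<in> {0..1}" "coop_h p q > 1"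
  obtains s where "0 \<le> s" "s < 1"
    "(\<integral>\<^sup>+u. \<integral>\<^sup>+v. ennreal s ^ min u v \<partial>binomial_pmf 2 p \<partial>binomial_pmf 4 q) = ennreal s"
proof
  let ?a0 = "min_binomial_zero_prob p q" and ?a2 = "min_binomial_two_prob p q"
  have "(1 - q) ^ 4 \<le> 1" using assms by (intro power_le_one) auto
  then have "0 \<le> ?a0" unfolding min_binomial_zero_prob_def using assms by simp
  moreover have "?a0 < ?a2" using assms(3) coop_h_eq[of p q] by linarith
  ultimately show "0 \<le> ?a0 / ?a2" "?a0 / ?a2 < 1" by simp_all
  then show "(\<integral>\<^sup>+u. \<integral>\<^sup>+v. ennreal (?a0 / ?a2) ^ min u v \<partial>binomial_pmf 2 p \<partial>binomial_pmf 4 q)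
      = ennreal (?a0 / ?a2)"
    using assms \<open>?a0 < ?a2\<close> \<open>0 \<le> ?a0\<close> by (simp add: nn_integral_pow_min_binomial_4_2)
qed

section \<open>One step of the chain and the supermartingale \<open>s\<^bsup>Z\<^sub>n\<^esup>\<close>\<close>

lemma card_coins_image:
  "card {x \<in> (\<lambda>i. (b, n, i)) ` {..<N}. f x} = card {i. i < N \<and> f (b, n, i)}"
proof -
  have "{x \<in> (\<lambda>i. (b, n, i)) ` {..<N}. f x} = (\<lambda>i. (b, n, i)) ` {i. i < N \<and> f (b, n, i)}"
    by auto
  then show ?thesis by (simp add: card_image inj_on_def)
qed

lemma map_pmf_count_coins:
  assumes "r \<in> {0..1}" "\<And>i. i < N \<Longrightarrow> c (b, n, i) = bernoulli_pmf r"
  shows "map_pmf (\<lambda>f. card {i. i < N \<and> f (b, n, i)}) (Pi_pmf ((\<lambda>i. (b, n, i)) ` {..<N}) False c)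
         = binomial_pmf N r"
proof -
  let ?A = "(\<lambda>i. (b, n, i)) ` {..<N}"
  have "Pi_pmf ?A False c = Pi_pmf ?A False (\<lambda>_. bernoulli_pmf r)"
    using assms(2) by (intro Pi_pmf_cong) auto
  moreover have "binomial_pmf N r = map_pmf (\<lambda>f. card {x\<in>?A. f x}) (Pi_pmf ?A False (\<lambda>_. bernoulli_pmf r))"
    using assms(1) by (intro binomial_pmf_altdef') (auto simp: card_image inj_on_def)
  ultimately show ?thesis by (simp add: card_coins_image)
qed

lemma map_pmf_count_coins_at:
  assumes N: "N \<le> 4 * 3 ^ n" and K: "K \<le> 4 * 3 ^ n" and p: "p \<in> {0..1}" and q: "q \<in> {0..1}"
  shows "map_pmf (\<lambda>g. (card {i. i < N \<and> g (True, n, i)}, card {i. i < K \<and> g (False, n, i)}))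
           (Pi_pmf (coins_at n) False (coin_pmf p q)) = pair_pmf (binomial_pmf N q) (binomial_pmf K p)"
  (is "map_pmf ?F _ = _")
proof -
  define T where "T = (\<lambda>i. (True, n, i)) ` {..<N}"
  define F where "F = (\<lambda>i. (False, n, i)) ` {..<K}"
  have TF: "T \<union> F \<subseteq> coins_at n" using N K by (auto simp: T_def F_def coins_at_def)
  have fin: "finite T" "finite F" and disj: "T \<inter> F = {}" by (auto simp: T_def F_def)
  have restrict_TF: "?F (\<lambda>x. if x \<in> T \<union> F then g x else False) = ?F g" for g
    by (auto simp: T_def F_def intro!: arg_cong[where f=card])
  have merge_TF: "?F (\<lambda>x. if x \<in> T then f x else g x)
      = (card {i. i < N \<and> f (True, n, i)}, card {i. i < K \<and> g (False, n, i)})" for f g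
    by (auto simp: T_def intro!: arg_cong[where f=card])
  have "map_pmf ?F (Pi_pmf (coins_at n) False (coin_pmf p q)) = map_pmf ?F (Pi_pmf (T \<union> F) False (coin_pmf p q))"
    by (simp only: Pi_pmf_subset[OF finite_coins_at TF] pmf.map_comp o_def restrict_TF)
  also have "\<dots> = map_pmf (\<lambda>(f, g). (card {i. i < N \<and> f (True, n, i)}, card {i. i < K \<and> g (False, n, i)}))
       (pair_pmf (Pi_pmf T False (coin_pmf p q)) (Pi_pmf F False (coin_pmf p q)))"
    by (simp only: Pi_pmf_union[OF fin disj] pmf.map_comp o_def case_prod_unfold merge_TF)
  also have "\<dots> = pair_pmf (map_pmf (\<lambda>f. card {i. i < N \<and> f (True, n, i)}) (Pi_pmf T False (coin_pmf p q)))
      (map_pmf (\<lambda>g. card {i. i < K \<and> g (False, n, i)}) (Pi_pmf F False (coin_pmf p q)))"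
    by (rule map_pair)
  also have "\<dots> = pair_pmf (binomial_pmf N q) (binomial_pmf K p)"
    unfolding T_def F_def using p q by (simp add: map_pmf_count_coins coin_pmf_def)
  finally show ?thesis .
qed

definition coop_next_Z :: "nat \<Rightarrow> nat \<times> nat \<Rightarrow> (bool \<times> nat \<times> nat \<Rightarrow> bool) \<Rightarrow> nat" where
  "coop_next_Z n s g = (case s of (x, y) \<Rightarrow>
     min (card {i. i < 2 * (x + y) \<and> g (True, n, i)}) (card {i. i < 2 * min x y \<and> g (False, n, i)}))"

lemma coop_Z_Suc_merge:
  "coop_Z (\<lambda>j. if j \<in> coins_before n then f j else g j) (1, 1) (Suc n)
     = coop_next_Z n (coop_state f (1, 1) n) g"
proof -
  have "coop_state (\<lambda>j. if j \<in> coins_before n then f j else g j) (1, 1) n = coop_state f (1, 1) n"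
    by (rule coop_state_coins_before) simp
  then show ?thesis
    by (cases "coop_state f (1, 1) n")
       (simp add: coop_Z_def coop_next_Z_def coin_at_notin_coins_before del: One_nat_def)
qed

context
  fixes p q :: real and e :: ennreal
  assumes p: "p \<in> {0..1}" and q: "q \<in> {0..1}" and e: "e \<le> 1"
    and gen_fun_le: "(\<integral>\<^sup>+u. \<integral>\<^sup>+v. e ^ min u v \<partial>binomial_pmf 2 p \<partial>binomial_pmf 4 q) \<le> e"
begin

lemma nn_integral_pow_coop_next_Z_le:
  assumes xy: "x + y \<le> 2 * 3 ^ n"
  shows "(\<integral>\<^sup>+g. e ^ coop_next_Z n (x, y) g \<partial>Pi_pmf (coins_at n) False (coin_pmf p q)) \<le> e ^ min x y"
proof -
  have "(\<integral>\<^sup>+g. e ^ coop_next_Z n (x, y) g \<partial>Pi_pmf (coins_at n) False (coin_pmf p q))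
      = (\<integral>\<^sup>+w. e ^ min (fst w) (snd w) \<partial>map_pmf (\<lambda>g. (card {i. i < 2 * (x + y) \<and> g (True, n, i)},
            card {i. i < 2 * min x y \<and> g (False, n, i)})) (Pi_pmf (coins_at n) False (coin_pmf p q)))"
    by (simp only: coop_next_Z_def nn_integral_map_pmf prod.case fst_conv snd_conv)
  also have "\<dots> = (\<integral>\<^sup>+u. \<integral>\<^sup>+v. e ^ min u v \<partial>binomial_pmf (2 * min x y) p \<partial>binomial_pmf (2 * (x + y)) q)"
    using xy p q by (simp add: map_pmf_count_coins_at nn_integral_pair_pmf')
  also have "\<dots> \<le> (\<integral>\<^sup>+u. \<integral>\<^sup>+v. e ^ min u v \<partial>binomial_pmf 2 p \<partial>binomial_pmf 4 q) ^ min x y"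
    using e p q by (intro nn_integral_pow_min_binomial_le) auto
  also have "\<dots> \<le> e ^ min x y"
    using gen_fun_le by (rule power_mono) simp
  finally show ?thesis .
qed

lemma nn_integral_pow_coop_Z_le:
  "(\<integral>\<^sup>+f. e ^ coop_Z f (1, 1) n \<partial>Pi_pmf (coins_before n) False (coin_pmf p q)) \<le> e"
proof (induction n)
  case 0
  show ?case by (simp add: coins_before_def coop_Z_def)
next
  case (Suc n)
  have "(\<integral>\<^sup>+f. e ^ coop_Z f (1, 1) (Suc n) \<partial>Pi_pmf (coins_before (Suc n)) False (coin_pmf p q))
     = (\<integral>\<^sup>+f. \<integral>\<^sup>+g. e ^ coop_next_Z n (coop_state f (1, 1) n) g
           \<partial>Pi_pmf (coins_at n) False (coin_pmf p q) \<partial>Pi_pmf (coins_before n) False (coin_pmf p q))"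
    by (simp only: coins_before_Suc Pi_pmf_union[OF finite_coins_before finite_coins_at coins_before_Int_coins_at]
        nn_integral_map_pmf nn_integral_pair_pmf' prod.case coop_Z_Suc_merge)
  also have "\<dots> \<le> (\<integral>\<^sup>+f. e ^ coop_Z f (1, 1) n \<partial>Pi_pmf (coins_before n) False (coin_pmf p q))"
  proof (rule nn_integral_mono)
    fix f
    obtain x y where st: "coop_state f (1, 1) n = (x, y)" by fastforce
    then show "(\<integral>\<^sup>+g. e ^ coop_next_Z n (coop_state f (1, 1) n) g \<partial>Pi_pmf (coins_at n) False (coin_pmf p q))
        \<le> e ^ coop_Z f (1, 1) n"
      using nn_integral_pow_coop_next_Z_le[OF coop_state_bound[OF st]] by (simp add: coop_Z_def)
  qed
  finally show ?case using Suc.IH by simp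
qed

end

lemma prob_coop_Z_eq_0_le:
  assumes "p \<in> {0..1}" "q \<in> {0..1}" "0 \<le> s" "s \<le> 1"
    and "(\<integral>\<^sup>+u. \<integral>\<^sup>+v. ennreal s ^ min u v \<partial>binomial_pmf 2 p \<partial>binomial_pmf 4 q) \<le> ennreal s"
  shows "measure (coop_space p q) {\<omega> \<in> space (coop_space p q). coop_Z \<omega> (1, 1) n = 0} \<le> s"
proof -
  let ?P = "Pi_pmf (coins_before n) False (coin_pmf p q)"
  have "ennreal (measure (coop_space p q) {\<omega> \<in> space (coop_space p q). coop_Z \<omega> (1, 1) n = 0})
      = (\<integral>\<^sup>+f. indicator {f. coop_Z f (1, 1) n = 0} f \<partial>?P)"
    by (subst measure_coop_Z_event) (simp add: measure_pmf.emeasure_eq_measure[symmetric])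
  also have "\<dots> \<le> (\<integral>\<^sup>+f. ennreal s ^ coop_Z f (1, 1) n \<partial>?P)"
    by (intro nn_integral_mono) (auto simp: indicator_def)
  also have "\<dots> \<le> ennreal s"
    using assms by (intro nn_integral_pow_coop_Z_le) auto
  finally show ?thesis
    using assms(3) by simp
qed

lemma measure_coop_survive_ge:
  assumes zero_le: "\<And>n. measure (coop_space p q) {\<omega> \<in> space (coop_space p q). coop_Z \<omega> (1, 1) n = 0} \<le> s"
  shows "1 - s \<le> measure (coop_space p q) (coop_survive p q (1, 1))"
proof -
  let ?M = "coop_space p q"
  interpret prob_space ?M by (rule prob_space_coop_space)
  define A where "A n = {\<omega> \<in> space ?M. coop_Z \<omega> (1, 1) n \<noteq> 0}" for n
  have A_sets: "A n \<in> sets ?M" for n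
    unfolding A_def by (rule coop_Z_event_in_sets)
  have A_eq: "A n = space ?M - {\<omega> \<in> space ?M. coop_Z \<omega> (1, 1) n = 0}" for n
    by (auto simp: A_def)
  have "measure ?M (A n) = 1 - measure ?M {\<omega> \<in> space ?M. coop_Z \<omega> (1, 1) n = 0}" for n
    unfolding A_eq by (rule prob_compl) (rule coop_Z_event_in_sets)
  then have A_ge: "1 - s \<le> measure ?M (A n)" for n using zero_le[of n] by simp
  have "decseq A"
  proof (rule decseq_SucI)
    fix n
    have "coop_Z \<omega> (1, 1) n \<noteq> 0" if "coop_Z \<omega> (1, 1) (Suc n) \<noteq> 0" for \<omega>
      using that by (rule contrapos_nn) (rule coop_Z_Suc_eq_0)
    then show "A (Suc n) \<subseteq> A n" unfolding A_def by blast
  qed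
  then have "(\<lambda>n. measure ?M (A n)) \<longlonglongrightarrow> measure ?M (\<Inter>n. A n)"
    using A_sets by (intro finite_Lim_measure_decseq) auto
  then have "1 - s \<le> measure ?M (\<Inter>n. A n)"
    using A_ge by (intro LIMSEQ_le_const) auto
  moreover have "coop_survive p q (1, 1) = (\<Inter>n. A n)"
    by (auto simp: coop_survive_def A_def)
  ultimately show ?thesis by simp
qed

theorem mainTheorem16:
  fixes p q :: real
  assumes "0 < p" "p < 1" "0 < q" "q < 1"
    and "coop_h p q > 1"
  shows "measure (coop_space p q) (coop_survive p q (1, 1)) > 0"
proof -
  have pq: "p \<in> {0..1}" "q \<in> {0..1}" using assms by auto
  obtain s where s: "0 \<le> s" "s < 1"
    and fixpoint: "(\<integral>\<^sup>+u. \<integral>\<^sup>+v. ennreal s ^ min u v \<partial>binomial_pmf 2 p \<partial>binomial_pmf 4 q) = ennreal s"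
    using coop_fixpoint[OF pq assms(5)] .
  have "measure (coop_space p q) {\<omega> \<in> space (coop_space p q). coop_Z \<omega> (1, 1) n = 0} \<le> s" for n
    using pq s fixpoint by (intro prob_coop_Z_eq_0_le) auto
  then have "1 - s \<le> measure (coop_space p q) (coop_survive p q (1, 1))"
    by (rule measure_coop_survive_ge)
  with \<open>s < 1\<close> show ?thesis by simp
qed

end
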